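(* Let $K$ be a precubical set. For any $p$-cube $x$ of $\omega\mathcal{L}(K)$ with $p\geq0$, there exist a $p$-cube $y$ of $K\subset\omega\mathcal{L}(K)$ and a map $\mu\in\widehat{\square}([p],[p])$ such that $x=\mu^*(y)$, where $\mu^*:\mathcal{L}(K)_p\to\mathcal{L}(K)_p$ is the image of $\mu$ under the presheaf $\mathcal{L}(K)$.
   Context: $[0]=\{()\}$, $[n]=\{0,1\}^n$ ($n\ge1$) with the product order. Face maps $\delta_i^\alpha:[n-1]\to[n]$ insert $\alpha\in\{0,1\}$ at position $i$; $\square$ is the category with objects $[n]$, $n\ge0$, generated by face maps; its presheaves are precubical sets. A map $[m]\to[n]$ is adjacency-preserving if strictly increasing and it sends pairs at Hamming distance $1$ to pairs at Hamming distance $1$; $\widehat\square$ is the category with objects $[n]$ and all adjacency-preserving maps (it contains $\square$); its presheaves are transverse symmetric precubical sets. $\omega$ is the restriction functor along $\square\subset\widehat\square$ and $\mathcal L$ its left adjoint. The unit $K\to\omega\mathcal L(K)$ is an injective map of presheaves, through which $K$ is regarded as a subobject of $\omega\mathcal L(K)$; $\omega\mathcal L(K)_p=\mathcal L(K)_p$. *)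

theory Defs
  imports Main "HOL-Library.FuncSet"
begin

section \<open>The cubes [n] = {0,1}^n as bool lists of length n\<close>

definition cube :: "nat \<Rightarrow> bool list set" where
  "cube n = {xs. length xs = n}"

definition cle :: "bool list \<Rightarrow> bool list \<Rightarrow> bool" where
  "cle xs ys \<longleftrightarrow> list_all2 (\<le>) xs ys"

definition cless :: "bool list \<Rightarrow> bool list \<Rightarrow> bool" where
  "cless xs ys \<longleftrightarrow> cle xs ys \<and> xs \<noteq> ys"

definition adjacent :: "bool list \<Rightarrow> bool list \<Rightarrow> bool" where
  "adjacent xs ys \<longleftrightarrow> length xs = length ys \<and>
     card {i. i < length xs \<and> xs ! i \<noteq> ys ! i} = 1"

section \<open>Morphisms (as extensional functions on [m])\<close>

definition idc :: "nat \<Rightarrow> bool list \<Rightarrow> bool list" where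
  "idc n = restrict id (cube n)"

definition compc :: "nat \<Rightarrow> (bool list \<Rightarrow> bool list) \<Rightarrow> (bool list \<Rightarrow> bool list) \<Rightarrow> bool list \<Rightarrow> bool list" where
  "compc l g f = restrict (g \<circ> f) (cube l)"

text \<open>Face map delta_i^alpha : [n] -> [n+1] inserting alpha at position i (0-based, i \<le> n).\<close>
definition face :: "nat \<Rightarrow> nat \<Rightarrow> bool \<Rightarrow> bool list \<Rightarrow> bool list" where
  "face n i \<alpha> = restrict (\<lambda>xs. take i xs @ [\<alpha>] @ drop i xs) (cube n)"

text \<open>The category \<box>: morphisms [m] -> [n] generated by face maps (and identities).\<close>
inductive is_box_hom :: "nat \<Rightarrow> nat \<Rightarrow> (bool list \<Rightarrow> bool list) \<Rightarrow> bool" where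
  "is_box_hom n n (idc n)"
| "i \<le> m \<Longrightarrow> is_box_hom m (Suc m) (face m i \<alpha>)"
| "is_box_hom m k f \<Longrightarrow> is_box_hom k n g \<Longrightarrow> is_box_hom m n (compc m g f)"

definition box_hom :: "nat \<Rightarrow> nat \<Rightarrow> (bool list \<Rightarrow> bool list) set" where
  "box_hom m n = {f. is_box_hom m n f}"

text \<open>The category \<box>-hat: all adjacency-preserving maps [m] -> [n].\<close>
definition ahom :: "nat \<Rightarrow> nat \<Rightarrow> (bool list \<Rightarrow> bool list) set" where
  "ahom m n = {f \<in> cube m \<rightarrow>\<^sub>E cube n.
      (\<forall>x\<in>cube m. \<forall>y\<in>cube m. cless x y \<longrightarrow> cless (f x) (f y)) \<and>
      (\<forall>x\<in>cube m. \<forall>y\<in>cube m. adjacent x y \<longrightarrow> adjacent (f x) (f y))}"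

text \<open>A precubical set is given by the sets of n-cubes C n and, for every
  \<box>-morphism f : [m] -> [n], the map act m n f : C n -> C m.\<close>
definition precubical :: "(nat \<Rightarrow> 'a set) \<Rightarrow> (nat \<Rightarrow> nat \<Rightarrow> (bool list \<Rightarrow> bool list) \<Rightarrow> 'a \<Rightarrow> 'a) \<Rightarrow> bool" where
  "precubical C act \<longleftrightarrow>
     (\<forall>m n f x. f \<in> box_hom m n \<longrightarrow> x \<in> C n \<longrightarrow> act m n f x \<in> C m) \<and>
     (\<forall>n x. x \<in> C n \<longrightarrow> act n n (idc n) x = x) \<and>
     (\<forall>l m n f g x. f \<in> box_hom l m \<longrightarrow> g \<in> box_hom m n \<longrightarrow> x \<in> C n \<longrightarrow>
        act l n (compc l g f) x = act l m f (act m n g x))"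

text \<open>L(K)_p = (\<Sum>n. K_n \<times> \<box>-hat([p],[n])) / ~ , where
  (m, f^* k, g) ~ (n, k, f \<circ> g) for f \<in> \<box>([m],[n]).\<close>
definition Lpre :: "(nat \<Rightarrow> 'a set) \<Rightarrow> nat \<Rightarrow> (nat \<times> 'a \<times> (bool list \<Rightarrow> bool list)) set" where
  "Lpre C p = {(n, k, g). k \<in> C n \<and> g \<in> ahom p n}"

definition Lstep :: "(nat \<Rightarrow> 'a set) \<Rightarrow> (nat \<Rightarrow> nat \<Rightarrow> (bool list \<Rightarrow> bool list) \<Rightarrow> 'a \<Rightarrow> 'a) \<Rightarrow> nat
    \<Rightarrow> ((nat \<times> 'a \<times> (bool list \<Rightarrow> bool list)) \<times> (nat \<times> 'a \<times> (bool list \<Rightarrow> bool list))) set" where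
  "Lstep C act p = {((m, act m n f k, g), (n, k, compc p f g)) | m n f k g.
      f \<in> box_hom m n \<and> k \<in> C n \<and> g \<in> ahom p m}"

definition Lequiv :: "(nat \<Rightarrow> 'a set) \<Rightarrow> (nat \<Rightarrow> nat \<Rightarrow> (bool list \<Rightarrow> bool list) \<Rightarrow> 'a \<Rightarrow> 'a) \<Rightarrow> nat
    \<Rightarrow> ((nat \<times> 'a \<times> (bool list \<Rightarrow> bool list)) \<times> (nat \<times> 'a \<times> (bool list \<Rightarrow> bool list))) set" where
  "Lequiv C act p = Id_on (Lpre C p) \<union> (Lstep C act p \<union> (Lstep C act p)\<inverse>)\<^sup>+"

definition Lcells :: "(nat \<Rightarrow> 'a set) \<Rightarrow> (nat \<Rightarrow> nat \<Rightarrow> (bool list \<Rightarrow> bool list) \<Rightarrow> 'a \<Rightarrow> 'a) \<Rightarrow> nat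
    \<Rightarrow> (nat \<times> 'a \<times> (bool list \<Rightarrow> bool list)) set set" where
  "Lcells C act p = Lpre C p // Lequiv C act p"

text \<open>Action mu^* : L(K)_p -> L(K)_q of mu \<in> \<box>-hat([q],[p]): [(n,k,g)] |-> [(n,k,g \<circ> mu)].\<close>
definition Lmap :: "(nat \<Rightarrow> 'a set) \<Rightarrow> (nat \<Rightarrow> nat \<Rightarrow> (bool list \<Rightarrow> bool list) \<Rightarrow> 'a \<Rightarrow> 'a) \<Rightarrow> nat \<Rightarrow> nat
    \<Rightarrow> (bool list \<Rightarrow> bool list) \<Rightarrow> (nat \<times> 'a \<times> (bool list \<Rightarrow> bool list)) set
    \<Rightarrow> (nat \<times> 'a \<times> (bool list \<Rightarrow> bool list)) set" where
  "Lmap C act q p \<mu> X = (\<Union>(n, k, g)\<in>X. Lequiv C act q `` {(n, k, compc q g \<mu>)})"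

text \<open>The unit K -> \<omega>L(K): y |-> [(p, y, id)].\<close>
definition Lunit :: "(nat \<Rightarrow> 'a set) \<Rightarrow> (nat \<Rightarrow> nat \<Rightarrow> (bool list \<Rightarrow> bool list) \<Rightarrow> 'a \<Rightarrow> 'a) \<Rightarrow> nat
    \<Rightarrow> 'a \<Rightarrow> (nat \<times> 'a \<times> (bool list \<Rightarrow> bool list)) set" where
  "Lunit C act p y = Lequiv C act p `` {(p, y, idc p)}"

end

theory Submission
  imports Defs
begin

text \<open>The maximal chain of [p] from 0\<dots>0 to 1\<dots>1 consists of p strict adjacent steps, and an
  adjacency-preserving map g : [p] \<rightarrow> [n] sends it to a chain of p strict adjacent steps. Hence
  g(0\<dots>0) \<le> g(1\<dots>1) differ in exactly p coordinates, and since g is monotone its whole image lies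
  in the p-dimensional face of [n] spanned by these two vertices. That face is the image of a
  composite f of face maps, so g = f \<circ> \<mu> with \<mu> \<in> \<box>-hat([p],[p]). In the coend, the p-cube
  represented by (n, k, f \<circ> \<mu>) equals the one represented by (p, f^* k, \<mu>), which is
  \<mu>^* applied to the image of f^* k under the unit.\<close>

fun hamming :: "bool list \<Rightarrow> bool list \<Rightarrow> nat" where
  "hamming (x # xs) (y # ys) = (if x = y then 0 else 1) + hamming xs ys"
| "hamming _ _ = 0"

definition weight :: "bool list \<Rightarrow> nat" where
  "weight xs = length (filter id xs)"

lemma Collect_less_Suc_split:
  "{i. i < Suc n \<and> P i} = (if P 0 then {0} else {}) \<union> Suc ` {i. i < n \<and> P (Suc i)}"
  by (auto simp: image_iff less_Suc_eq_0_disj)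

lemma card_differing_positions:
  "length xs = length ys \<Longrightarrow> card {i. i < length xs \<and> xs ! i \<noteq> ys ! i} = hamming xs ys"
proof (induction xs ys rule: list_induct2)
  case (Cons x xs y ys)
  let ?D = "{i. i < length xs \<and> xs ! i \<noteq> ys ! i}"
  have "{i. i < length (x # xs) \<and> (x # xs) ! i \<noteq> (y # ys) ! i} =
      (if x \<noteq> y then {0} else {}) \<union> Suc ` ?D"
    by (subst length_Cons, subst Collect_less_Suc_split) simp
  moreover have "card ((if x \<noteq> y then {0} else {}) \<union> Suc ` ?D) = (if x = y then 0 else 1) + card ?D"
    by (auto simp: card_insert_if card_image)
  ultimately show ?case using Cons.IH by simp
qed simp

lemma adjacent_iff_hamming: "adjacent xs ys \<longleftrightarrow> length xs = length ys \<and> hamming xs ys = 1"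
  unfolding adjacent_def using card_differing_positions by auto

lemma hamming_self [simp]: "hamming xs xs = 0"
  by (induction xs) auto

lemma hamming_append_left [simp]: "hamming (xs @ us) (xs @ vs) = hamming us vs"
  by (induction xs) auto

lemma cle_Cons [simp]: "cle (x # xs) (y # ys) \<longleftrightarrow> x \<le> y \<and> cle xs ys"
  by (simp add: cle_def)

lemma cle_length: "cle xs ys \<Longrightarrow> length xs = length ys"
  by (simp add: cle_def list_all2_lengthD)

lemma cle_refl [simp]: "cle xs xs"
  by (simp add: cle_def list_all2_refl)

lemma cle_append_left [simp]: "cle (xs @ us) (xs @ vs) \<longleftrightarrow> cle us vs"
  by (induction xs) auto

lemma hamming_add_weight: "cle u v \<Longrightarrow> hamming u v + weight u = weight v"
proof -
  assume "cle u v"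
  then have "length u = length v" by (rule cle_length)
  then show ?thesis using \<open>cle u v\<close>
    by (induction u v rule: list_induct2) (auto simp: weight_def)
qed

definition cube_chain :: "nat \<Rightarrow> nat \<Rightarrow> bool list" where
  "cube_chain p j = replicate j True @ replicate (p - j) False"

lemma cube_chain_in_cube: "j \<le> p \<Longrightarrow> cube_chain p j \<in> cube p"
  by (simp add: cube_chain_def cube_def)

lemma cube_chain_step:
  assumes "j < p"
  shows "cless (cube_chain p j) (cube_chain p (Suc j))"
    and "adjacent (cube_chain p j) (cube_chain p (Suc j))"
proof -
  have lower: "cube_chain p j = replicate j True @ False # replicate (p - Suc j) False"
    using assms by (simp add: cube_chain_def Suc_diff_Suc[symmetric])
  have upper: "cube_chain p (Suc j) = replicate j True @ True # replicate (p - Suc j) False"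
    by (simp add: cube_chain_def replicate_append_same[symmetric])
  show "cless (cube_chain p j) (cube_chain p (Suc j))"
    and "adjacent (cube_chain p j) (cube_chain p (Suc j))"
    unfolding lower upper cless_def adjacent_iff_hamming by simp_all
qed

lemma ahom_in_cube: "g \<in> ahom p n \<Longrightarrow> x \<in> cube p \<Longrightarrow> g x \<in> cube n"
  by (auto simp: ahom_def)

lemma ahom_cle_mono:
  "g \<in> ahom p n \<Longrightarrow> x \<in> cube p \<Longrightarrow> y \<in> cube p \<Longrightarrow> cle x y \<Longrightarrow> cle (g x) (g y)"
  by (cases "x = y") (auto simp: ahom_def cless_def)

lemma weight_ahom_cube_chain:
  assumes g: "g \<in> ahom p n" and "j \<le> p"
  shows "weight (g (cube_chain p j)) = weight (g (cube_chain p 0)) + j"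
  using \<open>j \<le> p\<close>
proof (induction j)
  case (Suc j)
  let ?x = "cube_chain p j" and ?y = "cube_chain p (Suc j)"
  have "j < p" using Suc.prems by simp
  then have "?x \<in> cube p" "?y \<in> cube p" by (simp_all add: cube_chain_in_cube)
  with g cube_chain_step[OF \<open>j < p\<close>] have "cless (g ?x) (g ?y)" "adjacent (g ?x) (g ?y)"
    unfolding ahom_def by blast+
  then have "hamming (g ?x) (g ?y) + weight (g ?x) = weight (g ?y)" "hamming (g ?x) (g ?y) = 1"
    using hamming_add_weight cless_def adjacent_iff_hamming by (metis, metis)
  then show ?case using Suc by simp
qed simp

text \<open>A face of [n] is encoded by a pattern: \<open>Some a\<close> marks a coordinate fixed to a, \<open>None\<close> a
  free coordinate. \<open>embed ps\<close> fills the free coordinates from its argument, \<open>project ps\<close> reads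
  them off again.\<close>

fun face_pattern :: "bool list \<Rightarrow> bool list \<Rightarrow> bool option list" where
  "face_pattern (x # xs) (y # ys) = (if x = y then Some x else None) # face_pattern xs ys"
| "face_pattern _ _ = []"

definition free_count :: "bool option list \<Rightarrow> nat" where
  "free_count ps = length (filter (\<lambda>q. q = None) ps)"

fun embed :: "bool option list \<Rightarrow> bool list \<Rightarrow> bool list" where
  "embed [] xs = []"
| "embed (Some a # ps) xs = a # embed ps xs"
| "embed (None # ps) xs = hd xs # embed ps (tl xs)"

fun project :: "bool option list \<Rightarrow> bool list \<Rightarrow> bool list" where
  "project [] ys = []"
| "project (Some a # ps) ys = project ps (tl ys)"
| "project (None # ps) ys = hd ys # project ps (tl ys)"

fun in_face :: "bool option list \<Rightarrow> bool list \<Rightarrow> bool" where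
  "in_face [] [] = True"
| "in_face (Some a # ps) (y # ys) = (y = a \<and> in_face ps ys)"
| "in_face (None # ps) (y # ys) = in_face ps ys"
| "in_face _ _ = False"

lemma free_count_face_pattern:
  "length a = length b \<Longrightarrow> free_count (face_pattern a b) = hamming a b"
  by (induction a b rule: list_induct2) (auto simp: free_count_def)

lemma length_face_pattern: "length a = length b \<Longrightarrow> length (face_pattern a b) = length a"
  by (induction a b rule: list_induct2) auto

lemma in_face_pattern_between: "cle a z \<Longrightarrow> cle z b \<Longrightarrow> in_face (face_pattern a b) z"
proof -
  assume between: "cle a z" "cle z b"
  then have "length a = length z" "length z = length b" by (simp_all add: cle_length)
  then show ?thesis using between
    by (induction a z b rule: list_induct3) (auto simp: le_bool_def)
qed

lemma length_embed: "length xs = free_count ps \<Longrightarrow> length (embed ps xs) = length ps"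
  by (induction ps xs rule: embed.induct) (auto simp: free_count_def)

lemma project_embed: "length xs = free_count ps \<Longrightarrow> project ps (embed ps xs) = xs"
  by (induction ps xs rule: embed.induct) (auto simp: free_count_def length_Suc_conv)

lemma embed_project:
  "in_face ps ys \<Longrightarrow> embed ps (project ps ys) = ys \<and> length (project ps ys) = free_count ps"
  by (induction ps ys rule: in_face.induct) (auto simp: free_count_def)

lemma embed_eq_iff:
  "length u = free_count ps \<Longrightarrow> length v = free_count ps \<Longrightarrow> embed ps u = embed ps v \<longleftrightarrow> u = v"
  by (metis project_embed)

lemma cle_embed_iff:
  "length u = free_count ps \<Longrightarrow> length v = free_count ps \<Longrightarrow> cle (embed ps u) (embed ps v) \<longleftrightarrow> cle u v"
proof (induction ps arbitrary: u v)
  case (Cons q ps) then show ?case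
    by (cases q) (auto simp: free_count_def length_Suc_conv)
qed (simp add: free_count_def)

lemma hamming_embed:
  "length u = free_count ps \<Longrightarrow> length v = free_count ps \<Longrightarrow> hamming (embed ps u) (embed ps v) = hamming u v"
proof (induction ps arbitrary: u v)
  case (Cons q ps) then show ?case
    by (cases q) (auto simp: free_count_def length_Suc_conv)
qed (simp add: free_count_def)

definition cons_lift :: "nat \<Rightarrow> (bool list \<Rightarrow> bool list) \<Rightarrow> bool list \<Rightarrow> bool list" where
  "cons_lift m f = restrict (\<lambda>xs. hd xs # f (tl xs)) (cube (Suc m))"

lemma is_box_hom_in_cube: "is_box_hom m k f \<Longrightarrow> xs \<in> cube m \<Longrightarrow> f xs \<in> cube k"
  by (induction arbitrary: xs rule: is_box_hom.induct)
     (auto simp: idc_def face_def compc_def cube_def)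

lemma cube_Suc_iff: "xs \<in> cube (Suc m) \<longleftrightarrow> (\<exists>y ys. xs = y # ys \<and> ys \<in> cube m)"
  by (auto simp: cube_def length_Suc_conv)

lemma is_box_hom_cons_lift: "is_box_hom m k f \<Longrightarrow> is_box_hom (Suc m) (Suc k) (cons_lift m f)"
proof (induction rule: is_box_hom.induct)
  case (1 n)
  have "cons_lift n (idc n) = idc (Suc n)"
    by (rule ext) (auto simp: cons_lift_def idc_def cube_Suc_iff)
  then show ?case by (metis is_box_hom.intros(1))
next
  case (2 i m \<alpha>)
  have "cons_lift m (face m i \<alpha>) = face (Suc m) (Suc i) \<alpha>"
    by (rule ext) (auto simp: cons_lift_def face_def cube_Suc_iff)
  then show ?case using 2 by (metis is_box_hom.intros(2) Suc_le_mono)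
next
  case (3 m k f n g)
  have "cons_lift m (compc m g f) = compc (Suc m) (cons_lift k g) (cons_lift m f)"
    by (rule ext) (use is_box_hom_in_cube[OF 3(1)] in \<open>auto simp: cons_lift_def compc_def cube_Suc_iff\<close>)
  then show ?case using 3 by (metis is_box_hom.intros(3))
qed

lemma is_box_hom_embed:
  "is_box_hom (free_count ps) (length ps) (restrict (embed ps) (cube (free_count ps)))"
proof (induction ps)
  case Nil
  have "restrict (embed []) (cube (free_count [])) = idc 0"
    by (rule ext) (auto simp: idc_def cube_def free_count_def)
  then show ?case using is_box_hom.intros(1)[of 0] by (simp add: free_count_def del: embed.simps)
next
  case (Cons q ps)
  show ?case
  proof (cases q)
    case None
    have "restrict (embed (q # ps)) (cube (free_count (q # ps)))
        = cons_lift (free_count ps) (restrict (embed ps) (cube (free_count ps)))"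
      by (rule ext) (auto simp: None cons_lift_def free_count_def cube_Suc_iff)
    moreover have "free_count (q # ps) = Suc (free_count ps)" by (simp add: None free_count_def)
    ultimately show ?thesis using is_box_hom_cons_lift[OF Cons] by (simp only: length_Cons)
  next
    case (Some a)
    have "restrict (embed (q # ps)) (cube (free_count ps))
        = compc (free_count ps) (face (length ps) 0 a) (restrict (embed ps) (cube (free_count ps)))"
      by (rule ext) (auto simp: Some compc_def face_def free_count_def cube_def length_embed)
    moreover have "free_count (q # ps) = free_count ps" by (simp add: Some free_count_def)
    moreover have "is_box_hom (length ps) (Suc (length ps)) (face (length ps) 0 a)"
      by (rule is_box_hom.intros(2)) simp
    ultimately show ?thesis using is_box_hom.intros(3)[OF Cons] by (simp only: length_Cons)
  qed
qed

subsection \<open>Factorisation of adjacency-preserving maps\<close>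

lemma ahom_face_pattern:
  assumes g: "g \<in> ahom p n"
  defines "ps \<equiv> face_pattern (g (cube_chain p 0)) (g (cube_chain p p))"
  shows "free_count ps = p" and "length ps = n" and "\<And>x. x \<in> cube p \<Longrightarrow> in_face ps (g x)"
proof -
  let ?a = "g (cube_chain p 0)" and ?b = "g (cube_chain p p)"
  have ends: "cube_chain p 0 \<in> cube p" "cube_chain p p \<in> cube p"
    by (simp_all add: cube_chain_in_cube)
  then have lengths: "length ?a = n" "length ?b = n"
    using ahom_in_cube[OF g] by (auto simp: cube_def)
  have between: "cle (cube_chain p 0) x" "cle x (cube_chain p p)" if "x \<in> cube p" for x
    using that by (auto simp: cube_chain_def cle_def list_all2_conv_all_nth cube_def)
  have "hamming ?a ?b + weight ?a = weight ?b"
    using ahom_cle_mono[OF g ends between(1)[OF ends(2)]] by (rule hamming_add_weight)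
  moreover have "weight ?b = weight ?a + p" using weight_ahom_cube_chain[OF g order_refl] by simp
  ultimately show "free_count ps = p"
    using lengths by (simp add: ps_def free_count_face_pattern)
  show "length ps = n" using lengths by (simp add: ps_def length_face_pattern)
  show "in_face ps (g x)" if "x \<in> cube p" for x
    unfolding ps_def using that ends between[OF that]
    by (intro in_face_pattern_between) (simp_all add: ahom_cle_mono[OF g])
qed

lemma ahom_factor:
  assumes g: "g \<in> ahom p n"
  obtains f \<mu> where "f \<in> box_hom p n" and "\<mu> \<in> ahom p p" and "g = compc p f \<mu>"
proof -
  obtain ps where ps: "free_count ps = p" "length ps = n" "\<And>x. x \<in> cube p \<Longrightarrow> in_face ps (g x)"
    using ahom_face_pattern[OF g] by blast
  define f where "f = restrict (embed ps) (cube p)"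
  define \<mu> where "\<mu> = restrict (\<lambda>x. project ps (g x)) (cube p)"
  have g_embed: "g x = embed ps (\<mu> x)" and \<mu>_cube: "\<mu> x \<in> cube p" if "x \<in> cube p" for x
    using embed_project[OF ps(3)[OF that]] that ps(1) by (simp_all add: \<mu>_def cube_def)
  have "f \<in> box_hom p n" using is_box_hom_embed[of ps] ps by (simp add: f_def box_hom_def)
  moreover have "g = compc p f \<mu>"
  proof
    fix x show "g x = compc p f \<mu> x"
      using g g_embed \<mu>_cube by (cases "x \<in> cube p") (auto simp: compc_def f_def ahom_def)
  qed
  moreover have "\<mu> \<in> ahom p p"
    unfolding ahom_def
  proof (intro CollectI conjI ballI impI)
    show "\<mu> \<in> cube p \<rightarrow>\<^sub>E cube p" using \<mu>_cube by (auto simp: \<mu>_def)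
  next
    fix x y assume "x \<in> cube p" "y \<in> cube p" "cless x y"
    with g have "cless (g x) (g y)" by (auto simp: ahom_def)
    with \<open>x \<in> cube p\<close> \<open>y \<in> cube p\<close> show "cless (\<mu> x) (\<mu> y)"
      using \<mu>_cube ps(1) by (simp add: g_embed cless_def cle_embed_iff embed_eq_iff cube_def)
  next
    fix x y assume "x \<in> cube p" "y \<in> cube p" "adjacent x y"
    with g have "adjacent (g x) (g y)" by (auto simp: ahom_def)
    with \<open>x \<in> cube p\<close> \<open>y \<in> cube p\<close> show "adjacent (\<mu> x) (\<mu> y)"
      using \<mu>_cube ps(1) by (simp add: g_embed adjacent_iff_hamming hamming_embed cube_def)
  qed
  ultimately show thesis using that by blast
qed

lemma compc_ahom: "g \<in> ahom p m \<Longrightarrow> \<mu> \<in> ahom p p \<Longrightarrow> compc p g \<mu> \<in> ahom p m"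
  unfolding ahom_def compc_def by (auto simp: PiE_def Pi_def)

lemma compc_assoc: "\<mu> \<in> ahom p p \<Longrightarrow> compc p (compc p f g) \<mu> = compc p f (compc p g \<mu>)"
  by (rule ext) (auto simp: compc_def ahom_def)

lemma idc_ahom: "idc p \<in> ahom p p"
  unfolding ahom_def idc_def by auto

lemma compc_idc_left: "\<mu> \<in> ahom p p \<Longrightarrow> compc p (idc p) \<mu> = \<mu>"
  by (rule ext) (auto simp: compc_def idc_def ahom_def)

definition precomp :: "nat \<Rightarrow> (bool list \<Rightarrow> bool list)
    \<Rightarrow> nat \<times> 'a \<times> (bool list \<Rightarrow> bool list) \<Rightarrow> nat \<times> 'a \<times> (bool list \<Rightarrow> bool list)" where
  "precomp p \<mu> = (\<lambda>(n, k, g). (n, k, compc p g \<mu>))"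

lemma Lstep_precomp:
  "(u, v) \<in> Lstep C act p \<Longrightarrow> \<mu> \<in> ahom p p \<Longrightarrow> (precomp p \<mu> u, precomp p \<mu> v) \<in> Lstep C act p"
  unfolding Lstep_def precomp_def by (auto simp: compc_assoc intro!: compc_ahom)

lemma Lequiv_precomp:
  assumes "(u, v) \<in> Lequiv C act p" and \<mu>: "\<mu> \<in> ahom p p"
  shows "(precomp p \<mu> u, precomp p \<mu> v) \<in> Lequiv C act p"
proof -
  let ?S = "Lstep C act p \<union> (Lstep C act p)\<inverse>"
  have step: "(precomp p \<mu> a, precomp p \<mu> b) \<in> ?S" if "(a, b) \<in> ?S" for a b
    using that Lstep_precomp[OF _ \<mu>] by blast
  have "(precomp p \<mu> u, precomp p \<mu> v) \<in> ?S\<^sup>+" if "(u, v) \<in> ?S\<^sup>+"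
    using that by induction (use step in \<open>blast intro: trancl_into_trancl\<close>)+
  moreover have "(precomp p \<mu> u, precomp p \<mu> u) \<in> Id_on (Lpre C p)" if "u \<in> Lpre C p"
    using that compc_ahom[OF _ \<mu>] by (auto simp: Lpre_def precomp_def)
  ultimately show ?thesis using assms(1) by (auto simp: Lequiv_def)
qed

lemma Lequiv_sym: "sym (Lequiv C act p)"
  unfolding Lequiv_def by (intro sym_Un sym_Id_on sym_trancl sym_Un_converse)

lemma Lequiv_trans: "trans (Lequiv C act p)"
  unfolding Lequiv_def trans_def by (auto intro: trancl_trans)

lemma Lequiv_Image_eq:
  "(u, v) \<in> Lequiv C act p \<Longrightarrow> Lequiv C act p `` {u} = Lequiv C act p `` {v}"
  using Lequiv_sym Lequiv_trans unfolding sym_def trans_def by blast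

lemma Lmap_Lunit:
  assumes "y \<in> C p" and \<mu>: "\<mu> \<in> ahom p p"
  shows "Lmap C act p p \<mu> (Lunit C act p y) = Lequiv C act p `` {(p, y, \<mu>)}"
proof -
  let ?R = "Lequiv C act p"
  have same_class: "?R `` {(n, k, compc p g \<mu>)} = ?R `` {(p, y, \<mu>)}"
    if "(n, k, g) \<in> ?R `` {(p, y, idc p)}" for n k g
  proof -
    from that Lequiv_precomp[OF _ \<mu>] have "((p, y, \<mu>), (n, k, compc p g \<mu>)) \<in> ?R"
      by (fastforce simp: precomp_def compc_idc_left[OF \<mu>])
    then show ?thesis by (metis Lequiv_Image_eq)
  qed
  have "(p, y, idc p) \<in> ?R `` {(p, y, idc p)}"
    using assms(1) idc_ahom by (auto simp: Lequiv_def Lpre_def)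
  then have "?R `` {(p, y, \<mu>)} \<subseteq> Lmap C act p p \<mu> (Lunit C act p y)"
    unfolding Lmap_def Lunit_def using compc_idc_left[OF \<mu>] by (force simp del: Image_singleton_iff)
  moreover have "Lmap C act p p \<mu> (Lunit C act p y) \<subseteq> ?R `` {(p, y, \<mu>)}"
    unfolding Lmap_def Lunit_def using same_class by fastforce
  ultimately show ?thesis by blast
qed

theorem proposition8p3:
  fixes C :: "nat \<Rightarrow> 'a set"
    and act :: "nat \<Rightarrow> nat \<Rightarrow> (bool list \<Rightarrow> bool list) \<Rightarrow> 'a \<Rightarrow> 'a"
    and p :: nat
    and x :: "(nat \<times> 'a \<times> (bool list \<Rightarrow> bool list)) set"
  assumes "precubical C act"
    and "x \<in> Lcells C act p"
  shows "\<exists>y \<in> C p. \<exists>\<mu> \<in> ahom p p. x = Lmap C act p p \<mu> (Lunit C act p y)"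
proof -
  obtain n k g where k: "k \<in> C n" and g: "g \<in> ahom p n"
    and x: "x = Lequiv C act p `` {(n, k, g)}"
    using assms(2) unfolding Lcells_def Lpre_def by (auto elim!: quotientE)
  obtain f \<mu> where f: "f \<in> box_hom p n" and \<mu>: "\<mu> \<in> ahom p p" and g_eq: "g = compc p f \<mu>"
    using ahom_factor[OF g] by blast
  define y where "y = act p n f k"
  have y: "y \<in> C p" using assms(1) f k unfolding precubical_def y_def by blast
  have "((p, y, \<mu>), (n, k, g)) \<in> Lstep C act p"
    unfolding Lstep_def y_def g_eq using f k \<mu> by blast
  then have "((p, y, \<mu>), (n, k, g)) \<in> Lequiv C act p"
    unfolding Lequiv_def by blast
  then have "x = Lequiv C act p `` {(p, y, \<mu>)}"
    unfolding x by (rule Lequiv_Image_eq[symmetric])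
  then show ?thesis using y \<mu> Lmap_Lunit[of y C p, OF y \<mu>] by blast
qed

end
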